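(* Let $K$ be a field, let $n\geq 2$ and $m\geq 2$ be integers such that $\operatorname{char}(K)$ does not divide $n$, and let $f(x_1,\dots,x_m)\in K\langle x_1,\dots,x_m\rangle$ be a nonzero multilinear polynomial. If $n\geq \frac{m+1}{2}$, then the $K$-linear span of $f(M_n(K))$ contains $sl_n(K)$.
   Context: $K\langle x_1,\dots,x_m\rangle$ is the free associative algebra on noncommuting variables $x_1,\dots,x_m$. A polynomial is multilinear if it has the form $\sum_{\sigma\in S_m}\alpha_\sigma x_{\sigma(1)}\cdots x_{\sigma(m)}$ with $\alpha_\sigma\in K$. $M_n(K)$ is the algebra of $n\times n$ matrices over $K$, $f(M_n(K))=\{f(a_1,\dots,a_m): a_i\in M_n(K)\}$ is the image of $f$ on $M_n(K)$, and $sl_n(K)$ is the set of trace zero matrices in $M_n(K)$. *)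

theory Defs
  imports "HOL-Analysis.Analysis"
begin

definition matscale :: "'a::field \<Rightarrow> 'a^'n^'n \<Rightarrow> 'a^'n^'n" where
  "matscale c M = (\<chi> i j. c * (M $ i $ j))"

definition mat_span :: "('a::field^'n^'n) set \<Rightarrow> ('a^'n^'n) set" where
  "mat_span S = module.span matscale S"

definition ordered_prod :: "nat \<Rightarrow> (nat \<Rightarrow> nat) \<Rightarrow> (nat \<Rightarrow> 'a::semiring_1^'n^'n) \<Rightarrow> 'a^'n^'n" where
  "ordered_prod m s a = foldr (\<lambda>i acc. a (s i) ** acc) [1..<m+1] (mat 1)"

text \<open>Evaluation of the multilinear polynomial with coefficients alpha (indexed by the
permutations of {1..m}) at the matrices a 1, ..., a m.\<close>
definition mlpoly_eval :: "nat \<Rightarrow> ((nat \<Rightarrow> nat) \<Rightarrow> 'a::field) \<Rightarrow> (nat \<Rightarrow> 'a^'n^'n) \<Rightarrow> 'a^'n^'n" where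
  "mlpoly_eval m alpha a = (\<Sum>s\<in>{s. s permutes {1..m}}. matscale (alpha s) (ordered_prod m s a))"

definition mlpoly_image :: "nat \<Rightarrow> ((nat \<Rightarrow> nat) \<Rightarrow> 'a::field) \<Rightarrow> ('a^'n^'n) set" where
  "mlpoly_image m alpha = {mlpoly_eval m alpha a | a. True}"

definition sl :: "('a::field^'n^'n) set" where
  "sl = {A. trace A = 0}"

end

theory Submission
  imports Defs
begin

text \<open>Write \<open>E(i,j)\<close> for the matrix units and let \<open>\<alpha>\<^sub>\<sigma> \<noteq> 0\<close>. Since \<open>m < 2n\<close>, any
  \<open>p \<noteq> q\<close> are joined by a path \<open>p = h\<^sub>0, h\<^sub>1, \<dots>, h\<^sub>d = q\<close> of \<open>d + 1 \<le> n\<close> distinct indices,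
  \<open>d = m div 2\<close>. Feed \<open>E(h\<^sub>0,h\<^sub>0), E(h\<^sub>0,h\<^sub>1), E(h\<^sub>1,h\<^sub>1), E(h\<^sub>1,h\<^sub>2), \<dots>\<close> into the variables in the
  order prescribed by \<open>\<sigma>\<close>: the monomial of \<open>\<sigma>\<close> becomes \<open>E(p,q)\<close>, while in every other monomial
  two adjacent factors fail to chain, so \<open>f\<close> takes the value \<open>\<alpha>\<^sub>\<sigma> E(p,q)\<close>.
  The image of \<open>f\<close> is closed under conjugation, and conjugating \<open>E(q,p)\<close> by \<open>1 + E(p,q)\<close>
  gives \<open>E(p,p) - E(q,q)\<close> up to off-diagonal units. These matrices span \<open>sl\<^sub>n\<close>.\<close>

lemma matrix_add_rdistrib: "(A + B) ** C = A ** C + B ** (C :: 'a::semiring_1^_^_)"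
  by (simp add: matrix_matrix_mult_def vec_eq_iff sum.distrib distrib_right)

lemma matrix_diff_ldistrib: "A ** (B - C) = A ** B - A ** (C :: 'a::ring_1^_^_)"
  by (simp add: matrix_matrix_mult_def vec_eq_iff sum_subtractf right_diff_distrib)

lemma matrix_diff_rdistrib: "(A - B) ** C = A ** C - B ** (C :: 'a::ring_1^_^_)"
  by (simp add: matrix_matrix_mult_def vec_eq_iff sum_subtractf left_diff_distrib)

lemma matrix_mult_sum_left: "(\<Sum>x\<in>S. F x) ** B = (\<Sum>x\<in>S. F x ** (B :: 'a::semiring_1^_^_))"
  by (induction S rule: infinite_finite_induct) (simp_all add: matrix_add_rdistrib)

lemma matrix_mult_sum_right: "A ** (\<Sum>x\<in>S. F x) = (\<Sum>x\<in>S. (A :: 'a::semiring_1^_^_) ** F x)"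
  by (induction S rule: infinite_finite_induct) (simp_all add: matrix_add_ldistrib)

lemma matscale_matrix_mult: "matscale c A ** B = matscale c (A ** B)"
  by (simp add: matscale_def matrix_matrix_mult_def vec_eq_iff sum_distrib_left mult.assoc)

lemma matrix_mult_matscale: "A ** matscale c B = matscale c (A ** B)"
  by (simp add: matscale_def matrix_matrix_mult_def vec_eq_iff sum_distrib_left mult.left_commute)

interpretation mat_module: vector_space "matscale :: 'a::field \<Rightarrow> 'a^'n^'n \<Rightarrow> 'a^'n^'n"
  by unfold_locales (simp_all add: matscale_def vec_eq_iff algebra_simps)

lemmas mat_span_base = mat_module.span_base[folded mat_span_def]
lemmas mat_span_zero = mat_module.span_zero[folded mat_span_def]
lemmas mat_span_add = mat_module.span_add[folded mat_span_def]
lemmas mat_span_diff = mat_module.span_diff[folded mat_span_def]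
lemmas mat_span_scale = mat_module.span_scale[folded mat_span_def]
lemmas mat_span_sum = mat_module.span_sum[folded mat_span_def]

lemma mat_span_scale_cancel:
  assumes "c \<noteq> 0" and "matscale c X \<in> mat_span S"
  shows "X \<in> mat_span S"
proof -
  have inverse: "matscale (inverse c) (matscale c X) = X"
    using assms(1) by (simp add: matscale_def vec_eq_iff)
  from assms(2) have "matscale (inverse c) (matscale c X) \<in> mat_span S"
    by (rule mat_span_scale)
  then show ?thesis
    unfolding inverse .
qed

definition mat_unit :: "'n \<Rightarrow> 'n \<Rightarrow> 'a::zero_neq_one^'n^'n" where
  "mat_unit i j = (\<chi> r c. if r = i \<and> c = j then 1 else 0)"

lemma mat_unit_mult:
  "mat_unit a b ** mat_unit c d = (if b = c then mat_unit a d else (0::'a::semiring_1^'n^'n))"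
proof -
  have "(\<Sum>k\<in>UNIV. (if r = a \<and> k = b then 1 else 0) * (if k = c \<and> s = d then 1 else 0)) =
      (\<Sum>k\<in>UNIV. if k = b then (if r = a \<and> b = c \<and> s = d then 1 else 0) else (0::'a))"
    for r s by (rule sum.cong) auto
  then show ?thesis
    by (simp add: mat_unit_def matrix_matrix_mult_def vec_eq_iff)
qed

lemma foldr_mat_unit_upt:
  assumes "a \<le> b"
  shows "foldr (\<lambda>i P. mat_unit (x i) (y i) ** P) [a..<Suc b] (mat 1) =
    (if \<forall>i. a \<le> i \<and> i < b \<longrightarrow> y i = x (Suc i) then mat_unit (x a) (y b)
     else (0::'a::semiring_1^'n^'n))"
  using assms
proof (induction a rule: inc_induct)
  case base
  then show ?case by auto
next
  case (step n)
  let ?chain = "\<lambda>k. \<forall>i. k \<le> i \<and> i < b \<longrightarrow> y i = x (Suc i)"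
  have chain_Suc: "?chain n \<longleftrightarrow> y n = x (Suc n) \<and> ?chain (Suc n)"
  proof (intro iffI conjI allI impI)
    fix i
    assume "y n = x (Suc n) \<and> ?chain (Suc n)" and "n \<le> i \<and> i < b"
    then show "y i = x (Suc i)" by (cases "i = n") auto
  qed (use step.hyps in auto)
  have "[n..<Suc b] = n # [Suc n..<Suc b]"
    using step.hyps by (simp add: upt_conv_Cons)
  then have "foldr (\<lambda>i P. mat_unit (x i) (y i) ** P) [n..<Suc b] (mat 1) =
      mat_unit (x n) (y n) ** (if ?chain (Suc n) then mat_unit (x (Suc n)) (y b) else 0 :: 'a^'n^'n)"
    using step.IH by (simp del: upt_Suc)
  then show ?case
    unfolding chain_Suc by (auto simp: mat_unit_mult simp del: upt_Suc)
qed

lemma permutes_increasing_eq_id: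
  assumes t: "t permutes {1..m}"
    and incr: "\<And>i. 1 \<le> i \<Longrightarrow> i < m \<Longrightarrow> t i < t (Suc i)"
  shows "t = id"
proof
  have gap: "t i + j \<le> t j + i" if "1 \<le> i" "i \<le> j" "j \<le> m" for i j
    using that(2)
  proof (induction j rule: dec_induct)
    case (step k)
    then show ?case using incr[of k] that(1,3) by simp
  qed simp
  fix i
  show "t i = id i"
  proof (cases "i \<in> {1..m}")
    case True
    then have "1 \<in> {1..m}" and "m \<in> {1..m}"
      by auto
    then have "t 1 \<in> {1..m}" and "t m \<in> {1..m}"
      by (simp_all only: permutes_in_image[OF t])
    moreover have "t 1 + i \<le> t i + 1" and "t i + m \<le> t m + i"
      using gap[of 1 i] gap[of i m] True by simp_all
    ultimately show ?thesis by simp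
  next
    case False
    then show ?thesis using permutes_not_in[OF t] by simp
  qed
qed

lemma exists_inj_path:
  fixes p q :: "'n::finite"
  assumes "p \<noteq> q" and "0 < d" and "d < CARD('n)"
  obtains h where "inj_on h {0..d}" and "h 0 = p" and "h d = q"
proof -
  obtain rs where rs: "set rs = UNIV - {p, q}" "distinct rs"
    using finite_distinct_list[of "UNIV - {p, q}"] by auto
  have "length rs = CARD('n) - 2"
    using distinct_card[OF rs(2)] rs(1) assms(1) by (simp add: card_Diff_subset)
  define path where "path = p # take (d - 1) rs @ [q]"
  have len: "length path = Suc d"
    using \<open>length rs = CARD('n) - 2\<close> assms(2,3) unfolding path_def by simp
  have "distinct path"
    using rs assms(1) unfolding path_def by (auto dest: in_set_takeD)
  then have "inj_on (nth path) {0..d}"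
    using len by (intro inj_on_nth) auto
  moreover have "path ! 0 = p" and "path ! d = q"
    using len assms(2) unfolding path_def by (cases d; simp add: nth_append)+
  ultimately show ?thesis using that by blast
qed

lemma ordered_prod_comp: "ordered_prod m s (a \<circ> t) = ordered_prod m (t \<circ> s) a"
  by (simp add: ordered_prod_def)

lemma ordered_prod_similar:
  assumes "g ** g' = mat 1" and "g' ** g = mat 1"
  shows "ordered_prod m s (\<lambda>j. g ** a j ** g') = g ** ordered_prod m s a ** (g' :: 'a::semiring_1^'n^'n)"
proof -
  have "foldr (\<lambda>i P. (g ** a (s i) ** g') ** P) xs (mat 1) =
      g ** foldr (\<lambda>i P. a (s i) ** P) xs (mat 1) ** g'" for xs
  proof (induction xs)
    case Nil
    then show ?case using assms(1) by simp
  next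
    case (Cons i xs)
    let ?Q = "foldr (\<lambda>i P. a (s i) ** P) xs (mat 1)"
    have "(g ** a (s i) ** g') ** (g ** ?Q ** g') = g ** a (s i) ** (g' ** g) ** ?Q ** g'"
      by (simp add: matrix_mul_assoc)
    also have "\<dots> = g ** (a (s i) ** ?Q) ** g'"
      using assms(2) by (simp add: matrix_mul_assoc)
    finally show ?case using Cons by simp
  qed
  then show ?thesis unfolding ordered_prod_def .
qed

lemma mlpoly_eval_in_image: "mlpoly_eval m alpha a \<in> mlpoly_image m alpha"
  by (auto simp: mlpoly_image_def)

lemma mlpoly_eval_similar:
  fixes g g' :: "'a::field^'n^'n"
  assumes "g ** g' = mat 1" and "g' ** g = mat 1"
  shows "mlpoly_eval m alpha (\<lambda>j. g ** a j ** g') = g ** mlpoly_eval m alpha a ** g'"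
  unfolding mlpoly_eval_def ordered_prod_similar[OF assms]
  by (simp add: matrix_mult_sum_left matrix_mult_sum_right matscale_matrix_mult matrix_mult_matscale)

lemma mlpoly_image_similar:
  fixes g g' :: "'a::field^'n^'n"
  assumes "g ** g' = mat 1" and "g' ** g = mat 1" and "X \<in> mlpoly_image m alpha"
  shows "g ** X ** g' \<in> mlpoly_image m alpha"
proof -
  from assms(3) obtain a where "X = mlpoly_eval m alpha a"
    unfolding mlpoly_image_def by blast
  then show ?thesis
    using mlpoly_eval_in_image mlpoly_eval_similar[OF assms(1,2)] by metis
qed

lemma less_of_div2_eq_pred_div2:
  "(k::nat) div 2 = (l - 1) div 2 \<Longrightarrow> k \<noteq> l \<Longrightarrow> 1 \<le> l \<Longrightarrow> k < l"
  by presburger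

text \<open>Positions \<open>k = 1, 2, 3, 4, \<dots>\<close> carry \<open>E(h\<^sub>0,h\<^sub>0), E(h\<^sub>0,h\<^sub>1), E(h\<^sub>1,h\<^sub>1), E(h\<^sub>1,h\<^sub>2), \<dots>\<close>.\<close>

definition zigzag_units :: "(nat \<Rightarrow> 'n) \<Rightarrow> nat \<Rightarrow> 'a::zero_neq_one^'n^'n" where
  "zigzag_units h k = mat_unit (h ((k - 1) div 2)) (h (k div 2))"

text \<open>The diagonal units are what makes this work: two zigzag units at positions \<open>k \<noteq> l\<close>
  can only be adjacent factors of a nonzero product if \<open>l\<close> is \<open>k + 1\<close> or \<open>k + 2\<close>.\<close>

lemma zigzag_link_imp_less:
  assumes t: "t permutes {1..m}" and h: "inj_on h {0..m div 2}"
    and "1 \<le> i" and "i < m" and link: "h (t i div 2) = h ((t (Suc i) - 1) div 2)"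
  shows "t i < t (Suc i)"
proof -
  have ti: "t i \<in> {1..m}" "t (Suc i) \<in> {1..m}"
    using permutes_in_image[OF t] \<open>1 \<le> i\<close> \<open>i < m\<close> by auto
  then have "t i div 2 \<le> m div 2" and "(t (Suc i) - 1) div 2 \<le> m div 2"
    by (auto intro!: div_le_mono)
  with link have "t i div 2 = (t (Suc i) - 1) div 2"
    by (intro inj_onD[OF h]) auto
  moreover have "t i \<noteq> t (Suc i)"
  proof
    assume "t i = t (Suc i)"
    then have "i = Suc i" by (rule injD[OF permutes_inj[OF t]])
    then show False by simp
  qed
  ultimately show ?thesis
    using ti by (intro less_of_div2_eq_pred_div2) auto
qed

lemma ordered_prod_zigzag_units:
  assumes t: "t permutes {1..m}" and "1 \<le> m" and h: "inj_on h {0..m div 2}"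
  shows "ordered_prod m t (zigzag_units h) =
    (if t = id then mat_unit (h 0) (h (m div 2)) else (0::'a::semiring_1^'n^'n))"
proof -
  let ?chain = "\<forall>i. 1 \<le> i \<and> i < m \<longrightarrow> h (t i div 2) = h ((t (Suc i) - 1) div 2)"
  have prod: "ordered_prod m t (zigzag_units h) =
      (if ?chain then mat_unit (h ((t 1 - 1) div 2)) (h (t m div 2)) else (0::'a^'n^'n))"
    using foldr_mat_unit_upt[of 1 m "\<lambda>i. h ((t i - 1) div 2)" "\<lambda>i. h (t i div 2)"] \<open>1 \<le> m\<close>
    by (simp add: ordered_prod_def zigzag_units_def del: upt_Suc)
  have chain_iff: "?chain \<longleftrightarrow> t = id"
  proof
    assume ?chain
    then have "t i < t (Suc i)" if "1 \<le> i" and "i < m" for i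
      using zigzag_link_imp_less[OF t h that] that by simp
    then show "t = id"
      by (rule permutes_increasing_eq_id[OF t])
  next
    assume "t = id"
    then show ?chain by simp
  qed
  show ?thesis
  proof (cases "t = id")
    case True
    then show ?thesis using chain_iff prod by simp
  next
    case False
    then show ?thesis unfolding prod chain_iff by simp
  qed
qed

lemma mlpoly_eval_zigzag_units:
  assumes s0: "s0 permutes {1..m}" and "1 \<le> m" and h: "inj_on h {0..m div 2}"
  shows "mlpoly_eval m alpha (zigzag_units h \<circ> inv s0) =
    matscale (alpha s0) (mat_unit (h 0) (h (m div 2)) :: 'a::field^'n^'n)"
proof -
  have "ordered_prod m s (zigzag_units h \<circ> inv s0) =
      (if s = s0 then mat_unit (h 0) (h (m div 2)) else (0::'a^'n^'n))"
    if s: "s permutes {1..m}" for s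
  proof -
    have id_iff: "inv s0 \<circ> s = id \<longleftrightarrow> s = s0"
      by (auto simp: fun_eq_iff permutes_inv_eq[OF s0])
    show ?thesis
      unfolding ordered_prod_comp id_iff
        ordered_prod_zigzag_units[OF permutes_compose[OF s permutes_inv[OF s0]] \<open>1 \<le> m\<close> h] ..
  qed
  then have "mlpoly_eval m alpha (zigzag_units h \<circ> inv s0) =
      (\<Sum>s\<in>{s. s permutes {1..m}}.
         if s = s0 then matscale (alpha s0) (mat_unit (h 0) (h (m div 2))) else 0)"
    unfolding mlpoly_eval_def by (intro sum.cong) (auto simp: matscale_def vec_eq_iff)
  also have "\<dots> = matscale (alpha s0) (mat_unit (h 0) (h (m div 2)))"
    using s0 by (simp add: finite_permutations)
  finally show ?thesis .
qed

lemma scaled_mat_unit_in_mlpoly_image: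
  fixes alpha :: "(nat \<Rightarrow> nat) \<Rightarrow> 'a::field"
  assumes s0: "s0 permutes {1..m}" and "2 \<le> m" and "m < 2 * CARD('n::finite)"
    and "p \<noteq> (q::'n)"
  shows "matscale (alpha s0) (mat_unit p q) \<in> (mlpoly_image m alpha :: ('a^'n^'n) set)"
proof -
  have "0 < m div 2" and "m div 2 < CARD('n)"
    using assms(2,3) by auto
  then obtain h where h: "inj_on h {0..m div 2}" "h 0 = p" "h (m div 2) = q"
    by (rule exists_inj_path[OF \<open>p \<noteq> q\<close>])
  have "1 \<le> m" using assms(2) by simp
  have eval: "mlpoly_eval m alpha (zigzag_units h \<circ> inv s0) = matscale (alpha s0) (mat_unit p q)"
    using mlpoly_eval_zigzag_units[OF s0 \<open>1 \<le> m\<close> h(1)] h(2,3) by simp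
  show ?thesis
    using mlpoly_eval_in_image[of m alpha "zigzag_units h \<circ> inv s0"] unfolding eval .
qed

lemma mat_unit_in_mat_span_mlpoly_image:
  fixes alpha :: "(nat \<Rightarrow> nat) \<Rightarrow> 'a::field"
  assumes "s0 permutes {1..m}" and "alpha s0 \<noteq> 0" and "2 \<le> m"
    and "m < 2 * CARD('n::finite)" and "p \<noteq> (q::'n)"
  shows "(mat_unit p q :: 'a^'n^'n) \<in> mat_span (mlpoly_image m alpha)"
proof (rule mat_span_scale_cancel[OF assms(2)])
  show "matscale (alpha s0) (mat_unit p q) \<in> mat_span (mlpoly_image m alpha)"
    by (intro mat_span_base scaled_mat_unit_in_mlpoly_image[OF assms(1,3-5)])
qed

lemma mat_unit_diff_in_mat_span_mlpoly_image:
  fixes alpha :: "(nat \<Rightarrow> nat) \<Rightarrow> 'a::field"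
  assumes s0: "s0 permutes {1..m}" and "alpha s0 \<noteq> 0" and "2 \<le> m"
    and "m < 2 * CARD('n::finite)" and "p \<noteq> (q::'n)"
  shows "(mat_unit p p - mat_unit q q :: 'a^'n^'n) \<in> mat_span (mlpoly_image m alpha)"
proof -
  define g :: "'a^'n^'n" where "g = mat 1 + mat_unit p q"
  define g' :: "'a^'n^'n" where "g' = mat 1 - mat_unit p q"
  have nilpotent: "mat_unit p q ** mat_unit p q = (0::'a^'n^'n)"
    using \<open>p \<noteq> q\<close> by (simp add: mat_unit_mult)
  have "g ** g' = mat 1" and "g' ** g = mat 1"
    unfolding g_def g'_def
    by (simp_all add: matrix_add_ldistrib matrix_add_rdistrib matrix_diff_ldistrib
        matrix_diff_rdistrib nilpotent)
  then have "g ** matscale (alpha s0) (mat_unit q p) ** g' \<in> mlpoly_image m alpha"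
    by (rule mlpoly_image_similar)
      (rule scaled_mat_unit_in_mlpoly_image[OF s0 assms(3,4) not_sym[OF \<open>p \<noteq> q\<close>]])
  moreover have "g ** mat_unit q p ** g' = mat_unit q p + mat_unit p p - mat_unit q q - mat_unit p q"
    using \<open>p \<noteq> q\<close> unfolding g_def g'_def
    by (simp add: matrix_add_ldistrib matrix_add_rdistrib matrix_diff_ldistrib
        matrix_diff_rdistrib mat_unit_mult)
  ultimately have "matscale (alpha s0) (mat_unit q p + mat_unit p p - mat_unit q q - mat_unit p q)
      \<in> mat_span (mlpoly_image m alpha)"
    unfolding matrix_mult_matscale matscale_matrix_mult
    by (simp add: mat_span_base)
  then have conj: "mat_unit q p + mat_unit p p - mat_unit q q - mat_unit p q
      \<in> mat_span (mlpoly_image m alpha)"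
    by (rule mat_span_scale_cancel[OF \<open>alpha s0 \<noteq> 0\<close>])
  have pq: "mat_unit p q \<in> mat_span (mlpoly_image m alpha)"
    and qp: "mat_unit q p \<in> mat_span (mlpoly_image m alpha)"
    using mat_unit_in_mat_span_mlpoly_image[where alpha = alpha, OF assms(1-4)] \<open>p \<noteq> q\<close>
    by auto
  have "(mat_unit q p + mat_unit p p - mat_unit q q - mat_unit p q) - mat_unit q p + mat_unit p q
      \<in> mat_span (mlpoly_image m alpha)"
    by (intro mat_span_add mat_span_diff conj pq qp)
  then show ?thesis by (simp add: algebra_simps)
qed

lemma sl_subset_mat_span:
  fixes S :: "('a::field^'n^'n) set"
  assumes offdiag: "\<And>p q. p \<noteq> q \<Longrightarrow> mat_unit p q \<in> mat_span S"
    and diag: "\<And>p q. p \<noteq> q \<Longrightarrow> mat_unit p p - mat_unit q q \<in> mat_span S"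
  shows "sl \<subseteq> mat_span S"
proof
  fix A :: "'a^'n^'n"
  assume "A \<in> sl"
  then have "trace A = 0" by (simp add: sl_def)
  obtain r :: 'n where True by blast
  define P where "P = {(i, j). (i::'n) \<noteq> j}"
  define B where "B = (\<Sum>z\<in>P. matscale (A $ fst z $ snd z) (mat_unit (fst z) (snd z) :: 'a^'n^'n))"
  define D where "D = (\<Sum>i\<in>UNIV. matscale (A $ i $ i) (mat_unit i i - mat_unit r r :: 'a^'n^'n))"
  have B_entry: "B $ x $ y = (if x \<noteq> y then A $ x $ y else 0)" for x y
  proof -
    have "B $ x $ y = (\<Sum>z\<in>P. A $ fst z $ snd z * (if x = fst z \<and> y = snd z then 1 else 0))"
      unfolding B_def by (simp add: matscale_def mat_unit_def)
    also have "\<dots> = (\<Sum>z\<in>P. if z = (x, y) then A $ x $ y else 0)"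
      by (rule sum.cong) auto
    finally show ?thesis
      unfolding P_def by (simp add: sum.delta')
  qed
  have D_entry: "D $ x $ y = (if x = y then A $ x $ x else 0) - (if x = r \<and> y = r then trace A else 0)"
    for x y
  proof -
    have "D $ x $ y = (\<Sum>i\<in>UNIV. A $ i $ i *
        ((if x = i \<and> y = i then 1 else 0) - (if x = r \<and> y = r then 1 else 0)))"
      unfolding D_def by (simp add: matscale_def mat_unit_def)
    also have "\<dots> = (\<Sum>i\<in>UNIV. if i = x then (if x = y then A $ x $ x else 0) else 0)
        - (\<Sum>i\<in>UNIV. A $ i $ i) * (if x = r \<and> y = r then 1 else 0)"
      unfolding right_diff_distrib sum_subtractf sum_distrib_right
      by (intro arg_cong2[where f = "(-)"] sum.cong) auto
    finally show ?thesis
      by (simp add: trace_def)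
  qed
  have "A = B + D"
    unfolding vec_eq_iff using \<open>trace A = 0\<close> by (simp add: B_entry D_entry)
  moreover have "B \<in> mat_span S"
    unfolding B_def P_def using offdiag by (auto intro!: mat_span_sum mat_span_scale)
  moreover have "mat_unit i i - mat_unit r r \<in> mat_span S" for i
    using diag[of i r] by (cases "i = r") (simp_all add: mat_span_zero)
  then have "D \<in> mat_span S"
    unfolding D_def by (intro mat_span_sum mat_span_scale)
  ultimately show "A \<in> mat_span S"
    by (simp add: mat_span_add)
qed

theorem theorem3p1:
  fixes alpha :: "(nat \<Rightarrow> nat) \<Rightarrow> 'a::field"
    and m :: nat
  assumes "CARD('n::finite) \<ge> 2"
    and "m \<ge> 2"
    and "of_nat CARD('n) \<noteq> (0::'a)"
    and "\<exists>s. s permutes {1..m} \<and> alpha s \<noteq> 0"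
    and "2 * CARD('n) \<ge> m + 1"
  shows "(sl :: ('a^'n^'n) set) \<subseteq> mat_span (mlpoly_image m alpha)"
proof -
  obtain s0 where "s0 permutes {1..m}" and "alpha s0 \<noteq> 0"
    using assms(4) by blast
  moreover have "m < 2 * CARD('n)"
    using assms(5) by simp
  ultimately show ?thesis
    using assms(2) mat_unit_in_mat_span_mlpoly_image mat_unit_diff_in_mat_span_mlpoly_image
    by (intro sl_subset_mat_span) blast+
qed

end
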